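(* Let $n\ge 6$, $1\le k\le n-1$, let $I,J$ be tightly $r$-interlacing $k$-subsets of $\{1,\dots,n\}$ with $I\setminus J=\{i_1,\dots,i_r\}$, $J\setminus I=\{j_1,\dots,j_r\}$, $1\le i_1<j_1<\dots<i_r<j_r\le n$, and let $b_1,\dots,b_{2r}\in\mathbb{C}[[t]]$ with $\sum_{l=1}^{2r}b_l=0$. Then the module $\mathbb{M}(I,J)$ is indecomposable if and only if there exist odd indices $p<q$ in $\{1,3,\dots,2r-1\}$ such that $t\nmid b_p+b_{p+1}$, $t\nmid b_q+b_{q+1}$, $t\nmid b_p+b_{p+1}+b_q+b_{q+1}$, and $t\mid b_i+b_{i+1}$ for every odd $i$ with $p<i<q$.
   Context: $\Gamma_n$ is the quiver with vertices $1,\dots,n$ on a cycle (vertex $0$ identified with $n$), arrows $x_i\colon i-1\to i$, $y_i\colon i\to i-1$. $B_{k,n}$ is its completed path algebra modulo the closure of the ideal generated by $xy=yx$ and $x^k=y^{n-k}$ at every vertex; its centre is $\mathbb{C}[[t]]$, $t=\sum_ix_iy_i$. $I,J$ are tightly $r$-interlacing if there are $\{i_1,i_3,\dots,i_{2r-1}\}\subset I\setminus J$, $\{i_2,\dots,i_{2r}\}\subset J\setminus I$ with $i_1<i_2<\dots<i_{2r}<i_1$ cyclically, no larger such subsets exist, and $|I\cap J|=k-r$. The $B_{k,n}$-module $\mathbb{M}(I,J)$ has $V_i=\mathbb{C}[[t]]^2$ at each vertex, with $x_{i_l}=\begin{pmatrix}t&b_{2l-1}\\0&1\end{pmatrix}$,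 $y_{i_l}=\begin{pmatrix}1&-b_{2l-1}\\0&t\end{pmatrix}$, $x_{j_l}=\begin{pmatrix}1&b_{2l}\\0&t\end{pmatrix}$, $y_{j_l}=\begin{pmatrix}t&-b_{2l}\\0&1\end{pmatrix}$ ($l=1,\dots,r$), $x_i=tE$, $y_i=E$ for $i\notin I\cup J$, and $x_i=E$, $y_i=tE$ for $i\in I\cap J$ ($E$ the $2\times2$ identity matrix). *)

theory Defs
  imports "HOL-Computational_Algebra.Formal_Power_Series" "HOL-Library.Product_Plus"
begin

text \<open>The coefficient ring C[[t]]: complex formal power series; t is fps_X.
  A 2x2 matrix over C[[t]] is a quadruple (a,b,c,d) standing for [[a,b],[c,d]],
  acting on column vectors (u,v) in C[[t]]^2.\<close>

type_synonym vec2 = "complex fps \<times> complex fps"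
type_synonym mat2 = "complex fps \<times> complex fps \<times> complex fps \<times> complex fps"

definition mapply :: "mat2 \<Rightarrow> vec2 \<Rightarrow> vec2" where
  "mapply M w = (case M of (a,b,c,d) \<Rightarrow> (case w of (u,v) \<Rightarrow> (a*u + b*v, c*u + d*v)))"

definition identity2 :: mat2 where "identity2 = (1,0,0,1)"
definition tE :: mat2 where "tE = (fps_X,0,0,fps_X)"

definition cprev :: "nat \<Rightarrow> nat \<Rightarrow> nat" where
  "cprev n i = (if i = 1 then n else i - 1)"

text \<open>A representation of Gamma_n with space C[[t]]^2 at every vertex:
  X i : V_(i-1) \<rightarrow> V_i is the matrix of x_i, Y i : V_i \<rightarrow> V_(i-1) the matrix of y_i.
  A subrepresentation (= B_{k,n}-submodule) is a family of C[[t]]-submodules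
  W i \<subseteq> V_i stable under all x_i and y_i.\<close>

definition fps_submodule :: "vec2 set \<Rightarrow> bool" where
  "fps_submodule W \<longleftrightarrow> (0::vec2) \<in> W \<and> (\<forall>v\<in>W. \<forall>w\<in>W. v + w \<in> W)
     \<and> (\<forall>c::complex fps. \<forall>(u,v)\<in>W. (c*u, c*v) \<in> W)"

definition subrep :: "nat \<Rightarrow> (nat \<Rightarrow> mat2) \<Rightarrow> (nat \<Rightarrow> mat2) \<Rightarrow> (nat \<Rightarrow> vec2 set) \<Rightarrow> bool" where
  "subrep n X Y W \<longleftrightarrow> (\<forall>i\<in>{1..n}. fps_submodule (W i)
      \<and> (\<forall>v\<in>W (cprev n i). mapply (X i) v \<in> W i)
      \<and> (\<forall>v\<in>W i. mapply (Y i) v \<in> W (cprev n i)))"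

definition decomposable_rep :: "nat \<Rightarrow> (nat \<Rightarrow> mat2) \<Rightarrow> (nat \<Rightarrow> mat2) \<Rightarrow> bool" where
  "decomposable_rep n X Y \<longleftrightarrow> (\<exists>W W'. subrep n X Y W \<and> subrep n X Y W'
      \<and> (\<forall>i\<in>{1..n}. W i \<inter> W' i = {0} \<and> (\<forall>v. \<exists>a\<in>W i. \<exists>c\<in>W' i. v = a + c))
      \<and> (\<exists>i\<in>{1..n}. W i \<noteq> {0}) \<and> (\<exists>i\<in>{1..n}. W' i \<noteq> {0}))"

text \<open>Indecomposable: nonzero (some vertex, each space C[[t]]^2 is nonzero) and not
  a direct sum of two nonzero submodules.\<close>
definition indecomposable_rep :: "nat \<Rightarrow> (nat \<Rightarrow> mat2) \<Rightarrow> (nat \<Rightarrow> mat2) \<Rightarrow> bool" where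
  "indecomposable_rep n X Y \<longleftrightarrow> n \<ge> 1 \<and> \<not> decomposable_rep n X Y"

text \<open>An r-interlacing witness is a list
  [i_1,...,i_{2r}] with odd positions in I-J, even positions in J-I, cyclically
  strictly increasing (some rotation is strictly increasing).\<close>
definition interlacing_witness :: "nat set \<Rightarrow> nat set \<Rightarrow> nat \<Rightarrow> nat list \<Rightarrow> bool" where
  "interlacing_witness I J r s \<longleftrightarrow> length s = 2*r
     \<and> (\<forall>l<r. s ! (2*l) \<in> I - J \<and> s ! (2*l+1) \<in> J - I)
     \<and> (\<exists>m. sorted_wrt (<) (rotate m s))"

definition tightly_interlacing :: "nat \<Rightarrow> nat set \<Rightarrow> nat set \<Rightarrow> nat \<Rightarrow> bool" where
  "tightly_interlacing k I J r \<longleftrightarrow> (\<exists>s. interlacing_witness I J r s)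
     \<and> (\<forall>m s. interlacing_witness I J m s \<longrightarrow> m \<le> r)
     \<and> card (I \<inter> J) = k - r"

text \<open>The matrices of M(I,J); ii l = i_l, jj l = j_l for l = 1..r.\<close>
definition MX :: "nat set \<Rightarrow> nat set \<Rightarrow> nat \<Rightarrow> (nat \<Rightarrow> nat) \<Rightarrow> (nat \<Rightarrow> nat)
                   \<Rightarrow> (nat \<Rightarrow> complex fps) \<Rightarrow> nat \<Rightarrow> mat2" where
  "MX I J r ii jj b i =
     (if \<exists>l\<in>{1..r}. ii l = i then
        (let l = (THE l. l \<in> {1..r} \<and> ii l = i) in (fps_X, b (2*l-1), 0, 1))
      else if \<exists>l\<in>{1..r}. jj l = i then
        (let l = (THE l. l \<in> {1..r} \<and> jj l = i) in (1, b (2*l), 0, fps_X))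
      else if i \<in> I \<inter> J then identity2
      else tE)"

definition MY :: "nat set \<Rightarrow> nat set \<Rightarrow> nat \<Rightarrow> (nat \<Rightarrow> nat) \<Rightarrow> (nat \<Rightarrow> nat)
                   \<Rightarrow> (nat \<Rightarrow> complex fps) \<Rightarrow> nat \<Rightarrow> mat2" where
  "MY I J r ii jj b i =
     (if \<exists>l\<in>{1..r}. ii l = i then
        (let l = (THE l. l \<in> {1..r} \<and> ii l = i) in (1, - b (2*l-1), 0, fps_X))
      else if \<exists>l\<in>{1..r}. jj l = i then
        (let l = (THE l. l \<in> {1..r} \<and> jj l = i) in (fps_X, - b (2*l), 0, 1))
      else if i \<in> I \<inter> J then tE
      else identity2)"

end

theory Submission
  imports Defs
begin

unbundle fps_syntax

text \<open>
  Along the cycle, all arrows of \<open>\<bbbM>(I,J)\<close> are scalar except at the \<open>2r\<close> special vertices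
  \<open>i\<^sub>1 < j\<^sub>1 < \<dots> < i\<^sub>r < j\<^sub>r\<close>. Up to nonzero scalars, the composite of the arrows up to
  the \<open>m\<close>-th special vertex is \<open>K\<^sub>m = [[t, S\<^sub>m], [0, t or 1]]\<close> with
  \<open>S\<^sub>m = b\<^sub>1 + \<dots> + b\<^sub>m\<close>, so an endomorphism \<open>F\<close> satisfies \<open>F\<^sub>i K = K F\<^sub>0\<close> and is
  determined by \<open>F\<^sub>0 = [[p, q], [r, s]]\<close>. Integrality at an even \<open>m\<close> with
  \<open>S\<^sub>m(0) \<noteq> 0\<close> forces \<open>r(0) = 0\<close> and \<open>S\<^sub>m(0) r\<^sub>1 = s(0) - p(0)\<close>; two distinct nonzero
  values \<open>S\<^sub>m(0)\<close> therefore make an idempotent \<open>F\<^sub>0\<close> congruent to \<open>0\<close> or \<open>1\<close> modulo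
  \<open>t\<close>, hence equal to it. If instead all nonzero values \<open>S\<^sub>2\<^sub>j(0)\<close> equal one \<open>\<beta>\<close>, the
  lines through \<open>K\<^sub>m (0, t)\<close> and \<open>K\<^sub>m (-\<beta>, t)\<close> are complementary subrepresentations.
  Finally, the even partial sums take two distinct nonzero values modulo \<open>t\<close> exactly when
  two consecutive nonvanishing residues of \<open>b\<^sub>2\<^sub>l\<^sub>-\<^sub>1 + b\<^sub>2\<^sub>l\<close> do not cancel.
\<close>

section \<open>Matrices over the power series ring\<close>

definition mat2_mult :: "mat2 \<Rightarrow> mat2 \<Rightarrow> mat2" where
  "mat2_mult A B = (case A of (a, b, c, d) \<Rightarrow> case B of (a', b', c', d') \<Rightarrow>
     (a*a' + b*c', a*b' + b*d', c*a' + d*c', c*b' + d*d'))"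

definition mat2_det :: "mat2 \<Rightarrow> complex fps" where
  "mat2_det M = (case M of (a, b, c, d) \<Rightarrow> a*d - b*c)"

definition scalar2 :: "complex fps \<Rightarrow> mat2" where
  "scalar2 c = (c, 0, 0, c)"

lemma scalar2_0 [simp]: "scalar2 0 = 0" and scalar2_1 [simp]: "scalar2 1 = identity2"
  by (simp_all add: scalar2_def zero_prod_def identity2_def)

lemma mapply_mat2_mult: "mapply (mat2_mult A B) w = mapply A (mapply B w)"
  by (cases A; cases B; cases w) (simp add: mat2_mult_def mapply_def algebra_simps)

lemma mapply_diff: "mapply M (v - w) = mapply M v - mapply M w"
  by (cases M; cases v; cases w) (simp add: mapply_def algebra_simps)

lemma mapply_0 [simp]: "mapply 0 w = 0"
  by (cases w) (simp add: mapply_def zero_prod_def)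

lemma mapply_identity2 [simp]: "mapply identity2 w = w"
  by (cases w) (simp add: mapply_def identity2_def)

lemma mat2_eqI:
  assumes "\<And>w. mapply A w = mapply B w"
  shows "A = B"
  using assms[of "(1, 0)"] assms[of "(0, 1)"] by (cases A; cases B) (simp add: mapply_def)

lemma mat2_mult_assoc: "mat2_mult (mat2_mult A B) C = mat2_mult A (mat2_mult B C)"
  by (rule mat2_eqI) (simp add: mapply_mat2_mult)

lemma mat2_mult_scalar2_commute: "mat2_mult (scalar2 c) A = mat2_mult A (scalar2 c)"
  by (cases A) (simp add: mat2_mult_def scalar2_def mult.commute)

lemma mat2_mult_scalar2_left_commute:
  "mat2_mult A (mat2_mult (scalar2 c) B) = mat2_mult (scalar2 c) (mat2_mult A B)"
  by (cases A; cases B) (simp add: mat2_mult_def scalar2_def algebra_simps)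

lemma mat2_mult_identity2 [simp]: "mat2_mult identity2 A = A" "mat2_mult A identity2 = A"
  by (cases A; simp add: mat2_mult_def identity2_def)+

lemma mat2_mult_diff_left: "mat2_mult (A - B) C = mat2_mult A C - mat2_mult B C"
  by (cases A; cases B; cases C) (simp add: mat2_mult_def algebra_simps)

lemma mat2_mult_diff_right: "mat2_mult A (B - C) = mat2_mult A B - mat2_mult A C"
  by (cases A; cases B; cases C) (simp add: mat2_mult_def algebra_simps)

lemma mat2_mult_scalar2_cancel:
  assumes "mat2_mult (scalar2 c) A = mat2_mult (scalar2 c) B" "c \<noteq> 0"
  shows "A = B"
  using assms by (cases A; cases B) (simp add: mat2_mult_def scalar2_def)

text \<open>Multiplying by the adjugate of \<open>B\<close> turns \<open>A B = 0\<close> into \<open>det B \<cdot> A = 0\<close>.\<close>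
lemma mat2_mult_eq_0_cancel:
  assumes AB: "mat2_mult A B = 0" and det: "mat2_det B \<noteq> 0"
  shows "A = 0"
proof -
  obtain a b c d e f g h where A: "A = (a, b, c, d)" and B: "B = (e, f, g, h)"
    by (cases A; cases B) auto
  have eqs: "a*e + b*g = 0" "a*f + b*h = 0" "c*e + d*g = 0" "c*f + d*h = 0"
    using AB by (simp_all add: A B mat2_mult_def zero_prod_def)
  have "a * (e*h - f*g) = (a*e + b*g) * h - (a*f + b*h) * g"
       "b * (e*h - f*g) = (a*f + b*h) * e - (a*e + b*g) * f"
       "c * (e*h - f*g) = (c*e + d*g) * h - (c*f + d*h) * g"
       "d * (e*h - f*g) = (c*f + d*h) * e - (c*e + d*g) * f"
    by (simp_all add: algebra_simps)
  moreover have "e*h - f*g \<noteq> 0" using det by (simp add: B mat2_det_def)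
  ultimately show ?thesis using eqs by (simp add: A zero_prod_def)
qed

lemma mat2_mult_right_cancel:
  assumes "mat2_mult A C = mat2_mult B C" "mat2_det C \<noteq> 0"
  shows "A = B"
  using mat2_mult_eq_0_cancel[of "A - B" C] assms by (simp add: mat2_mult_diff_left)

text \<open>An idempotent \<open>E\<close> with \<open>E \<equiv> 0 (mod t)\<close> vanishes: \<open>E (1 - E) = 0\<close> and
  \<open>det (1 - E)\<close> has constant term \<open>1\<close>.\<close>
lemma idempotent_mat2_eq_0:
  assumes idem: "mat2_mult E E = E" and E: "E = (p, q, r, s)"
    and "p $ 0 = 0" "q $ 0 = 0" "r $ 0 = 0" "s $ 0 = 0"
  shows "E = 0"
proof (rule mat2_mult_eq_0_cancel)
  show "mat2_mult E (identity2 - E) = 0"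
    using idem by (simp add: mat2_mult_diff_right)
  have "mat2_det (identity2 - E) $ 0 = 1"
    using assms by (simp add: E identity2_def mat2_det_def)
  then show "mat2_det (identity2 - E) \<noteq> 0" by auto
qed

lemma idempotent_mat2_trivial:
  assumes idem: "mat2_mult E E = E" and E: "E = (p, q, r, s)"
    and r0: "r $ 0 = 0" and sp: "s $ 0 = p $ 0"
  shows "E = 0 \<or> E = identity2"
proof -
  have "(p*p + q*r) $ 0 = p $ 0" "(p*q + q*s) $ 0 = q $ 0"
    using idem by (simp_all add: E mat2_mult_def)
  then have p0: "p $ 0 * p $ 0 = p $ 0" and q0: "2 * p $ 0 * q $ 0 = q $ 0"
    using r0 sp by (simp_all add: algebra_simps)
  from p0 consider "p $ 0 = 0" | "p $ 0 = 1"
    by (metis mult_cancel_right1 mult_zero_left)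
  then show ?thesis
  proof cases
    case 1
    then have "E = 0" using idempotent_mat2_eq_0[OF idem E] q0 r0 sp by simp
    then show ?thesis ..
  next
    case 2
    have "mat2_mult (identity2 - E) (identity2 - E) = identity2 - E"
      using idem by (simp add: mat2_mult_diff_left mat2_mult_diff_right)
    moreover have "identity2 - E = (1 - p, - q, - r, 1 - s)"
      by (simp add: E identity2_def)
    ultimately have "identity2 - E = 0"
      using idempotent_mat2_eq_0[of "identity2 - E"] 2 q0 r0 sp by simp
    then show ?thesis by simp
  qed
qed

section \<open>Decompositions and idempotent endomorphisms\<close>

definition vec2_scale :: "complex fps \<Rightarrow> vec2 \<Rightarrow> vec2" where
  "vec2_scale c w = (c * fst w, c * snd w)"

definition complementary :: "vec2 set \<Rightarrow> vec2 set \<Rightarrow> bool" where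
  "complementary A B \<longleftrightarrow> A \<inter> B = {0} \<and> (\<forall>v. \<exists>a\<in>A. \<exists>c\<in>B. v = a + c)"

lemma fps_submodule_zero: "fps_submodule A \<Longrightarrow> 0 \<in> A"
  by (simp add: fps_submodule_def)

lemma fps_submodule_add: "fps_submodule A \<Longrightarrow> x \<in> A \<Longrightarrow> y \<in> A \<Longrightarrow> x + y \<in> A"
  by (simp add: fps_submodule_def)

lemma fps_submodule_scale: "fps_submodule A \<Longrightarrow> x \<in> A \<Longrightarrow> vec2_scale c x \<in> A"
  unfolding fps_submodule_def vec2_scale_def by (cases x) fastforce

lemma fps_submodule_diff:
  assumes "fps_submodule A" "x \<in> A" "y \<in> A"
  shows "x - y \<in> A"
proof -
  have "x - y = x + vec2_scale (-1) y" by (cases x; cases y) (simp add: vec2_scale_def)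
  then show ?thesis using assms fps_submodule_add fps_submodule_scale by metis
qed

lemma complementary_unique:
  assumes "fps_submodule A" "fps_submodule B" "complementary A B"
    and "a \<in> A" "v - a \<in> B" "a' \<in> A" "v - a' \<in> B"
  shows "a = a'"
proof -
  have "a - a' \<in> A" using assms fps_submodule_diff by blast
  moreover have "a - a' \<in> B"
    using fps_submodule_diff[OF assms(2,7,5)] by (simp add: algebra_simps)
  ultimately have "a - a' \<in> A \<inter> B" by blast
  then show ?thesis using assms(3) unfolding complementary_def by simp
qed

lemma complementary_projection:
  assumes fA: "fps_submodule A" and fB: "fps_submodule B" and AB: "complementary A B"
  obtains P where "\<And>v. mapply P v \<in> A" "\<And>v. v - mapply P v \<in> B"
    and "\<And>v a. a \<in> A \<Longrightarrow> v - a \<in> B \<Longrightarrow> mapply P v = a"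
proof -
  obtain a1 a2 where a: "a1 \<in> A" "(1, 0) - a1 \<in> B" "a2 \<in> A" "(0, 1) - a2 \<in> B"
    using AB unfolding complementary_def by (metis add_diff_cancel_left')
  define P where "P = (fst a1, fst a2, snd a1, snd a2)"
  have P: "mapply P (u, w) = vec2_scale u a1 + vec2_scale w a2" for u w
    by (simp add: P_def mapply_def vec2_scale_def algebra_simps)
  have "(u, w) - mapply P (u, w) = vec2_scale u ((1, 0) - a1) + vec2_scale w ((0, 1) - a2)" for u w
    by (simp add: P vec2_scale_def algebra_simps)
  then have "mapply P v \<in> A" "v - mapply P v \<in> B" for v
    using a fA fB fps_submodule_add fps_submodule_scale by (cases v; metis P)+
  moreover have "mapply P v = a" if "a \<in> A" "v - a \<in> B" for v a
    using complementary_unique[OF fA fB AB] calculation that by blast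
  ultimately show thesis using that by blast
qed

text \<open>Only the compatibility of the projections with the arrows \<open>x\<^sub>i\<close> is recorded;
  it is all that the indecomposability argument uses.\<close>
lemma decomposable_rep_idempotents:
  assumes "decomposable_rep n X Y"
  obtains E where "\<And>i. i \<in> {1..n} \<Longrightarrow> mat2_mult (E i) (E i) = E i"
    and "\<And>i. i \<in> {1..n} \<Longrightarrow> mat2_mult (X i) (E (cprev n i)) = mat2_mult (E i) (X i)"
    and "\<exists>i\<in>{1..n}. E i \<noteq> 0" and "\<exists>i\<in>{1..n}. E i \<noteq> identity2"
proof -
  obtain W W' where sW: "subrep n X Y W" and sW': "subrep n X Y W'"
    and compl: "\<And>i. i \<in> {1..n} \<Longrightarrow> complementary (W i) (W' i)"
    and nz: "\<exists>i\<in>{1..n}. W i \<noteq> {0}" and nz': "\<exists>i\<in>{1..n}. W' i \<noteq> {0}"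
    using assms unfolding decomposable_rep_def complementary_def by blast
  have fW: "fps_submodule (W i)" "fps_submodule (W' i)" if "i \<in> {1..n}" for i
    using sW sW' that unfolding subrep_def by auto
  have "\<forall>i\<in>{1..n}. \<exists>P. (\<forall>v. mapply P v \<in> W i) \<and> (\<forall>v. v - mapply P v \<in> W' i)
      \<and> (\<forall>v a. a \<in> W i \<longrightarrow> v - a \<in> W' i \<longrightarrow> mapply P v = a)"
    using complementary_projection[OF fW compl] by metis
  then obtain E where E: "\<And>i v. i \<in> {1..n} \<Longrightarrow> mapply (E i) v \<in> W i"
      "\<And>i v. i \<in> {1..n} \<Longrightarrow> v - mapply (E i) v \<in> W' i"
    and unique: "\<And>i v a. i \<in> {1..n} \<Longrightarrow> a \<in> W i \<Longrightarrow> v - a \<in> W' i \<Longrightarrow> mapply (E i) v = a"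
    by metis
  have "mat2_mult (E i) (E i) = E i" if i: "i \<in> {1..n}" for i
    using unique[OF i E(1)[OF i]] fW(2)[OF i] fps_submodule_zero
    by (intro mat2_eqI) (simp add: mapply_mat2_mult)
  moreover have "mat2_mult (X i) (E (cprev n i)) = mat2_mult (E i) (X i)" if i: "i \<in> {1..n}" for i
  proof (rule mat2_eqI)
    fix v
    have j: "cprev n i \<in> {1..n}" using i by (auto simp: cprev_def)
    have "mapply (X i) (mapply (E (cprev n i)) v) \<in> W i"
      "mapply (X i) (v - mapply (E (cprev n i)) v) \<in> W' i"
      using sW sW' i E(1,2)[OF j] unfolding subrep_def by blast+
    then show "mapply (mat2_mult (X i) (E (cprev n i))) v = mapply (mat2_mult (E i) (X i)) v"
      using unique[OF i] by (simp add: mapply_mat2_mult mapply_diff)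
  qed
  moreover have "\<exists>i\<in>{1..n}. E i \<noteq> 0" "\<exists>i\<in>{1..n}. E i \<noteq> identity2"
  proof -
    obtain i w where "i \<in> {1..n}" "w \<in> W i" "w \<noteq> 0"
      using nz fW fps_submodule_zero by blast
    then show "\<exists>i\<in>{1..n}. E i \<noteq> 0"
      using unique fW(2) fps_submodule_zero by (metis diff_self mapply_0)
    obtain i w where "i \<in> {1..n}" "w \<in> W' i" "w \<noteq> 0"
      using nz' fW fps_submodule_zero by blast
    then show "\<exists>i\<in>{1..n}. E i \<noteq> identity2"
      using unique fW(1) fps_submodule_zero by (metis diff_zero mapply_identity2)
  qed
  ultimately show thesis using that by blast
qed

section \<open>Representations along a chain\<close>

definition arrow :: "nat \<Rightarrow> complex fps \<Rightarrow> mat2" where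
  "arrow v \<beta> = (if odd v then (fps_X, \<beta>, 0, 1) else (1, \<beta>, 0, fps_X))"

definition coarrow :: "nat \<Rightarrow> complex fps \<Rightarrow> mat2" where
  "coarrow v \<beta> = (if odd v then (1, - \<beta>, 0, fps_X) else (fps_X, - \<beta>, 0, 1))"

definition psum :: "(nat \<Rightarrow> 'a::comm_monoid_add) \<Rightarrow> nat \<Rightarrow> 'a" where
  "psum b m = (\<Sum>l=1..m. b l)"

lemma psum_0 [simp]: "psum b 0 = 0"
  by (simp add: psum_def)

lemma psum_Suc: "psum b (Suc m) = psum b m + b (Suc m)"
  by (simp add: psum_def)

text \<open>Up to a nonzero scalar, \<open>path_mat b m\<close> is the product of the arrow matrices
  \<open>arrow m (b m) \<cdots> arrow 1 (b 1)\<close>.\<close>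
definition path_mat :: "(nat \<Rightarrow> complex fps) \<Rightarrow> nat \<Rightarrow> mat2" where
  "path_mat b m = (fps_X, psum b m, 0, if odd m then 1 else fps_X)"

lemma path_mat_0: "path_mat b 0 = scalar2 fps_X"
  by (simp add: path_mat_def scalar2_def)

lemma mat2_det_path_mat: "mat2_det (path_mat b m) \<noteq> 0"
  by (simp add: path_mat_def mat2_det_def)

lemma arrow_path_mat:
  "mat2_mult (arrow (Suc m) (b (Suc m))) (path_mat b m)
     = mat2_mult (scalar2 (if odd m then 1 else fps_X)) (path_mat b (Suc m))"
  by (simp add: arrow_def path_mat_def mat2_mult_def scalar2_def psum_Suc algebra_simps)

text \<open>The representation read along the path \<open>1, \<dots>, n\<close>: \<open>cnt i\<close> is the number of
  special vertices among \<open>1, \<dots>, i\<close>, the \<open>v\<close>-th special vertex carries the arrows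
  \<open>arrow v (b v)\<close> and \<open>coarrow v (b v)\<close>, all other arrows are scalar.\<close>
locale rep_chain =
  fixes n :: nat and cnt :: "nat \<Rightarrow> nat" and b :: "nat \<Rightarrow> complex fps"
    and X Y :: "nat \<Rightarrow> mat2"
  assumes cnt_0: "cnt 0 = 0"
    and chain_step: "\<And>i. i \<in> {1..n} \<Longrightarrow>
      (cnt i = cnt (i - 1) \<and> (\<exists>c d. c \<noteq> 0 \<and> X i = scalar2 c \<and> Y i = scalar2 d))
      \<or> (cnt i = Suc (cnt (i - 1)) \<and> X i = arrow (cnt i) (b (cnt i)) \<and> Y i = coarrow (cnt i) (b (cnt i)))"
begin

definition chain_endo :: "(nat \<Rightarrow> mat2) \<Rightarrow> bool" where
  "chain_endo F \<longleftrightarrow> (\<forall>i\<in>{1..n}. mat2_mult (X i) (F (i - 1)) = mat2_mult (F i) (X i))"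

lemma chain_endoD: "chain_endo F \<Longrightarrow> i \<in> {1..n} \<Longrightarrow> mat2_mult (X i) (F (i - 1)) = mat2_mult (F i) (X i)"
  by (simp add: chain_endo_def)

lemma cnt_le_Suc: "i \<in> {1..n} \<Longrightarrow> cnt (i - 1) \<le> cnt i \<and> cnt i \<le> Suc (cnt (i - 1))"
  using chain_step by fastforce

lemma cnt_mono: "i \<le> j \<Longrightarrow> j \<le> n \<Longrightarrow> cnt i \<le> cnt j"
proof (induction j)
  case (Suc j)
  then show ?case using cnt_le_Suc[of "Suc j"] by (cases "i = Suc j") auto
qed simp

lemma cnt_attains:
  assumes "m \<le> cnt n"
  obtains i where "i \<le> n" "cnt i = m"
proof -
  have "\<bar>int (cnt (i + 1)) - int (cnt i)\<bar> \<le> 1" if "i < n" for i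
    using cnt_le_Suc[of "Suc i"] that by simp
  then obtain i where "i \<le> n" "int (cnt i) = int m"
    using nat0_intermed_int_val[of n "int \<circ> cnt" "int m"] assms cnt_0 by auto
  then show thesis using that by simp
qed

lemma arrow_path_mat_step:
  assumes "i \<in> {1..n}"
  obtains \<kappa> where "\<kappa> \<noteq> 0"
    and "mat2_mult (X i) (path_mat b (cnt (i - 1))) = mat2_mult (scalar2 \<kappa>) (path_mat b (cnt i))"
  using chain_step[OF assms]
proof
  assume "cnt i = cnt (i - 1) \<and> (\<exists>c d. c \<noteq> 0 \<and> X i = scalar2 c \<and> Y i = scalar2 d)"
  then obtain c where "c \<noteq> 0" "X i = scalar2 c" "cnt i = cnt (i - 1)" by blast
  then show thesis using that[of c] by simp
next
  let ?m = "cnt (i - 1)"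
  assume "cnt i = Suc ?m \<and> X i = arrow (cnt i) (b (cnt i)) \<and> Y i = coarrow (cnt i) (b (cnt i))"
  then have "cnt i = Suc ?m" "X i = arrow (Suc ?m) (b (Suc ?m))" by simp_all
  then show thesis using that[of "if odd ?m then 1 else fps_X"] arrow_path_mat[of ?m b] by simp
qed

text \<open>An endomorphism is determined by its value at vertex \<open>0\<close>: it is the conjugate
  of \<open>F 0\<close> by the path matrix, which is invertible over the Laurent series.\<close>
lemma endo_path_mat:
  assumes endo: "chain_endo F"
  shows "i \<le> n \<Longrightarrow> mat2_mult (F i) (path_mat b (cnt i)) = mat2_mult (path_mat b (cnt i)) (F 0)"
proof (induction i)
  case 0
  show ?case by (simp add: cnt_0 path_mat_0 mat2_mult_scalar2_commute)
next
  case (Suc i)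
  let ?K = "path_mat b (cnt i)" and ?K' = "path_mat b (cnt (Suc i))"
  have i: "Suc i \<in> {1..n}" using Suc.prems by simp
  obtain \<kappa> where \<kappa>: "\<kappa> \<noteq> 0" "mat2_mult (X (Suc i)) ?K = mat2_mult (scalar2 \<kappa>) ?K'"
    using arrow_path_mat_step[OF i] by auto
  have "mat2_mult (scalar2 \<kappa>) (mat2_mult (F (Suc i)) ?K')
      = mat2_mult (F (Suc i)) (mat2_mult (X (Suc i)) ?K)"
    by (simp add: \<kappa>(2) mat2_mult_scalar2_left_commute)
  also have "\<dots> = mat2_mult (X (Suc i)) (mat2_mult (F i) ?K)"
    using chain_endoD[OF endo i] by (simp add: mat2_mult_assoc[symmetric])
  also have "\<dots> = mat2_mult (scalar2 \<kappa>) (mat2_mult ?K' (F 0))"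
    using Suc by (simp add: \<kappa>(2) mat2_mult_assoc[symmetric])
  finally show ?case using mat2_mult_scalar2_cancel \<kappa>(1) by blast
qed

lemma endo_scalar2:
  assumes "chain_endo F" and "F 0 = scalar2 c" and "i \<le> n"
  shows "F i = scalar2 c"
  using endo_path_mat[OF assms(1,3)] assms(2) mat2_det_path_mat
  by (metis mat2_mult_right_cancel mat2_mult_scalar2_commute)

end

lemma conjugate_even_path_mat:
  assumes conj: "mat2_mult F (fps_X, S, 0, fps_X) = mat2_mult (fps_X, S, 0, fps_X) (p, q, r, s)"
    and S0: "S $ 0 \<noteq> 0"
  shows "r $ 0 = 0" and "S $ 0 * r $ 1 = s $ 0 - p $ 0"
proof -
  obtain p' q' r' s' where F: "F = (p', q', r', s')" by (cases F) auto
  have row1: "p' * fps_X = fps_X * p + S * r" "p' * S + q' * fps_X = fps_X * q + S * s"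
    using conj by (simp_all add: F mat2_mult_def)
  from arg_cong[OF row1(1), of "\<lambda>f. f $ 0"] show r0: "r $ 0 = 0"
    using S0 by simp
  from arg_cong[OF row1(1), of "\<lambda>f. f $ 1"] have "p' $ 0 = p $ 0 + S $ 0 * r $ 1"
    using r0 by (simp add: fps_mult_nth_1)
  moreover from arg_cong[OF row1(2), of "\<lambda>f. f $ 0"] have "p' $ 0 = s $ 0"
    using S0 by simp
  ultimately show "S $ 0 * r $ 1 = s $ 0 - p $ 0" by simp
qed

context rep_chain
begin

lemma endo_even_position:
  assumes endo: "chain_endo F" and F0: "F 0 = (p, q, r, s)"
    and i: "i \<le> n" "even (cnt i)" "psum b (cnt i) $ 0 \<noteq> 0"
  shows "r $ 0 = 0" and "psum b (cnt i) $ 0 * r $ 1 = s $ 0 - p $ 0"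
proof -
  have "mat2_mult (F i) (fps_X, psum b (cnt i), 0, fps_X)
      = mat2_mult (fps_X, psum b (cnt i), 0, fps_X) (p, q, r, s)"
    using endo_path_mat[OF endo i(1)] i(2) F0 by (simp add: path_mat_def)
  then show "r $ 0 = 0" "psum b (cnt i) $ 0 * r $ 1 = s $ 0 - p $ 0"
    using conjugate_even_path_mat i(3) by blast+
qed

text \<open>Two distinct nonzero values of the partial sums force \<open>F 0 \<equiv> 0\<close> or \<open>F 0 \<equiv> 1\<close>
  modulo \<open>t\<close>; idempotence then does the rest.\<close>
lemma endo_trivial:
  assumes endo: "chain_endo F" and idem: "mat2_mult (F 0) (F 0) = F 0"
    and i: "i1 \<le> n" "i2 \<le> n" "even (cnt i1)" "even (cnt i2)"
    and vals: "psum b (cnt i1) $ 0 \<noteq> 0" "psum b (cnt i2) $ 0 \<noteq> 0"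
      "psum b (cnt i1) $ 0 \<noteq> psum b (cnt i2) $ 0"
  shows "(\<forall>i\<le>n. F i = 0) \<or> (\<forall>i\<le>n. F i = identity2)"
proof -
  obtain p q r s where F0: "F 0 = (p, q, r, s)" by (cases "F 0") auto
  note c1 = endo_even_position[OF endo F0 i(1) i(3) vals(1)]
  note c2 = endo_even_position[OF endo F0 i(2) i(4) vals(2)]
  have "psum b (cnt i1) $ 0 * r $ 1 = psum b (cnt i2) $ 0 * r $ 1"
    using c1(2) c2(2) by simp
  then have "r $ 1 = 0" using vals(3) by simp
  then have "s $ 0 = p $ 0" using c1(2) by simp
  then have "F 0 = scalar2 0 \<or> F 0 = scalar2 1"
    using idempotent_mat2_trivial[OF idem F0 c1(1)] by simp
  then show ?thesis using endo_scalar2[OF endo] by (metis scalar2_0 scalar2_1)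
qed

lemma indecomposable_if_two_values:
  assumes "n \<ge> 1"
    and i: "i1 \<le> n" "i2 \<le> n" "even (cnt i1)" "even (cnt i2)"
    and vals: "psum b (cnt i1) $ 0 \<noteq> 0" "psum b (cnt i2) $ 0 \<noteq> 0"
      "psum b (cnt i1) $ 0 \<noteq> psum b (cnt i2) $ 0"
  shows "indecomposable_rep n X Y"
  unfolding indecomposable_rep_def
proof (intro conjI notI)
  assume "decomposable_rep n X Y"
  then obtain E where idem: "\<And>i. i \<in> {1..n} \<Longrightarrow> mat2_mult (E i) (E i) = E i"
    and comm: "\<And>i. i \<in> {1..n} \<Longrightarrow> mat2_mult (X i) (E (cprev n i)) = mat2_mult (E i) (X i)"
    and nontriv: "\<exists>i\<in>{1..n}. E i \<noteq> 0" "\<exists>i\<in>{1..n}. E i \<noteq> identity2"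
    by (rule decomposable_rep_idempotents) blast
  define F where "F i = E (if i = 0 then n else i)" for i
  have "mat2_mult (X i) (F (i - 1)) = mat2_mult (F i) (X i)" if "i \<in> {1..n}" for i
    using comm[OF that] that by (cases "i = 1") (simp_all add: F_def cprev_def)
  then have "chain_endo F" by (simp add: chain_endo_def)
  moreover have "mat2_mult (F 0) (F 0) = F 0"
    using idem assms(1) by (simp add: F_def)
  ultimately have "(\<forall>i\<le>n. F i = 0) \<or> (\<forall>i\<le>n. F i = identity2)"
    using endo_trivial i vals by blast
  then show False using nontriv by (auto simp: F_def)
qed (use assms(1) in simp)

end

section \<open>Splitting a chain into two lines\<close>

definition vec2_line :: "vec2 \<Rightarrow> vec2 set" where
  "vec2_line g = range (\<lambda>c. vec2_scale c g)"

definition vec2_det :: "vec2 \<Rightarrow> vec2 \<Rightarrow> complex fps" where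
  "vec2_det g h = fst g * snd h - snd g * fst h"

lemma vec2_scale_0 [simp]: "vec2_scale 0 g = 0" and vec2_scale_1 [simp]: "vec2_scale 1 g = g"
  by (simp_all add: vec2_scale_def zero_prod_def)

lemma mapply_scalar2 [simp]: "mapply (scalar2 c) g = vec2_scale c g"
  by (cases g) (simp add: mapply_def scalar2_def vec2_scale_def)

lemma mapply_vec2_scale: "mapply M (vec2_scale c v) = vec2_scale c (mapply M v)"
  by (cases M; cases v) (simp add: mapply_def vec2_scale_def algebra_simps)

lemma fps_submodule_vec2_line: "fps_submodule (vec2_line g)"
  unfolding fps_submodule_def vec2_line_def
proof (intro conjI ballI allI)
  show "0 \<in> range (\<lambda>c. vec2_scale c g)"
    by (rule range_eqI[of _ _ 0]) simp
  show "v + w \<in> range (\<lambda>c. vec2_scale c g)" if v: "v \<in> range (\<lambda>c. vec2_scale c g)"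
    and w: "w \<in> range (\<lambda>c. vec2_scale c g)" for v w
  proof -
    obtain c d where "v = vec2_scale c g" "w = vec2_scale d g" using v w by blast
    then have "v + w = vec2_scale (c + d) g" by (simp add: vec2_scale_def algebra_simps)
    then show ?thesis by simp
  qed
  show "case x of (u, v) \<Rightarrow> (c * u, c * v) \<in> range (\<lambda>c. vec2_scale c g)"
    if x: "x \<in> range (\<lambda>c. vec2_scale c g)" for c x
  proof -
    obtain d where "x = vec2_scale d g" using x by blast
    then have "(c * fst x, c * snd x) = vec2_scale (c * d) g" by (simp add: vec2_scale_def)
    then show ?thesis by (simp add: case_prod_unfold)
  qed
qed

lemma vec2_line_mapply:
  assumes "mapply M g = vec2_scale \<kappa> h" and "v \<in> vec2_line g"
  shows "mapply M v \<in> vec2_line h"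
proof -
  obtain c where "v = vec2_scale c g" using assms(2) unfolding vec2_line_def by blast
  then have "mapply M v = vec2_scale c (vec2_scale \<kappa> h)"
    using assms(1) by (simp add: mapply_vec2_scale)
  also have "\<dots> = vec2_scale (c * \<kappa>) h" by (simp add: vec2_scale_def)
  finally show ?thesis unfolding vec2_line_def by simp
qed

lemma complementary_vec2_line:
  assumes D: "vec2_det g h $ 0 \<noteq> 0"
  shows "complementary (vec2_line g) (vec2_line h)"
proof -
  obtain g1 g2 h1 h2 where gh: "g = (g1, g2)" "h = (h1, h2)" by (cases g; cases h) auto
  define D where "D = g1 * h2 - g2 * h1"
  have D0: "D $ 0 \<noteq> 0" using assms by (simp add: D_def gh vec2_det_def)
  have scale_eq: "c = 0" if "vec2_scale c g = vec2_scale e h" for c e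
  proof -
    have eqs: "c * g1 = e * h1" "c * g2 = e * h2" using that by (simp_all add: gh vec2_scale_def)
    have "c * D = (c * g1) * h2 - (c * g2) * h1" by (simp add: D_def algebra_simps)
    also have "\<dots> = 0" unfolding eqs by (simp add: algebra_simps)
    finally have "c * D = 0" .
    then show "c = 0" using D0 by auto
  qed
  have "v = 0" if v: "v \<in> vec2_line g \<inter> vec2_line h" for v
  proof -
    obtain c e where "v = vec2_scale c g" "v = vec2_scale e h"
      using v unfolding vec2_line_def by blast
    then show ?thesis using scale_eq by (metis vec2_scale_0)
  qed
  then have "vec2_line g \<inter> vec2_line h \<subseteq> {0}" by blast
  moreover have "0 \<in> vec2_line g \<inter> vec2_line h"
    using fps_submodule_vec2_line fps_submodule_zero by blast
  ultimately have "vec2_line g \<inter> vec2_line h = {0}" by blast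
  moreover have "\<exists>a\<in>vec2_line g. \<exists>a'\<in>vec2_line h. v = a + a'" for v
  proof -
    obtain v1 v2 where v: "v = (v1, v2)" by (cases v)
    let ?c = "(v1 * h2 - v2 * h1) * inverse D" and ?e = "(g1 * v2 - g2 * v1) * inverse D"
    have "vec2_scale ?c g + vec2_scale ?e h = (v1 * (inverse D * D), v2 * (inverse D * D))"
      by (simp add: gh D_def vec2_scale_def algebra_simps)
    also have "\<dots> = v" using D0 by (simp add: v inverse_mult_eq_1)
    finally show ?thesis unfolding vec2_line_def by (metis rangeI)
  qed
  ultimately show ?thesis unfolding complementary_def by blast
qed

lemma fps_X_mult_fps_shift_1: "f $ 0 = 0 \<Longrightarrow> fps_X * fps_shift 1 f = (f :: complex fps)"
  by (rule fps_ext) simp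

text \<open>A primitive generator of the line through \<open>path_mat b m *v (- a, t)\<close>; for \<open>a = 0\<close> and
  \<open>a = \<beta>\<close> these lines split the representation when the even partial sums are \<open>\<equiv> 0\<close> or
  \<open>\<equiv> \<beta>\<close> modulo \<open>t\<close>.\<close>
definition line_gen :: "(nat \<Rightarrow> complex fps) \<Rightarrow> complex \<Rightarrow> nat \<Rightarrow> vec2" where
  "line_gen b a m = (let T = psum b m - fps_const a in
     if odd m then (T, 1) else if T $ 0 = 0 then (fps_shift 1 T, 1) else (T, fps_X))"

lemma line_gen_nonzero: "line_gen b a m \<noteq> 0"
  by (simp add: line_gen_def Let_def zero_prod_def)

lemma line_gen_in_vec2_line: "line_gen b a m \<in> vec2_line (line_gen b a m)"
  unfolding vec2_line_def by (rule range_eqI[of _ _ 1]) simp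

lemma line_gen_odd: "odd m \<Longrightarrow> line_gen b a m = (psum b m - fps_const a, 1)"
  by (simp add: line_gen_def)

lemma line_gen_even_dvd:
  "even m \<Longrightarrow> (psum b m - fps_const a) $ 0 = 0
     \<Longrightarrow> line_gen b a m = (fps_shift 1 (psum b m - fps_const a), 1)"
  by (simp add: line_gen_def)

lemma line_gen_even_not_dvd:
  "even m \<Longrightarrow> (psum b m - fps_const a) $ 0 \<noteq> 0
     \<Longrightarrow> line_gen b a m = (psum b m - fps_const a, fps_X)"
  by (simp add: line_gen_def)

lemma arrows_line_gen:
  obtains \<kappa> \<kappa>' where
    "mapply (arrow (Suc m) (b (Suc m))) (line_gen b a m) = vec2_scale \<kappa> (line_gen b a (Suc m))"
    "mapply (coarrow (Suc m) (b (Suc m))) (line_gen b a (Suc m)) = vec2_scale \<kappa>' (line_gen b a m)"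
proof -
  define T where "T = psum b m - fps_const a"
  have T': "psum b (Suc m) - fps_const a = T + b (Suc m)"
    by (simp add: T_def psum_Suc)
  consider "even m" "T $ 0 = 0" | "even m" "T $ 0 \<noteq> 0"
    | "odd m" "(T + b (Suc m)) $ 0 = 0" | "odd m" "(T + b (Suc m)) $ 0 \<noteq> 0" by blast
  then show thesis
  proof cases
    case 1
    then show thesis
      using that[of 1 fps_X] line_gen_even_dvd[of m b a] line_gen_odd[of "Suc m" b a]
      by (simp add: T_def[symmetric] T' arrow_def coarrow_def mapply_def vec2_scale_def
          fps_X_mult_fps_shift_1[OF 1(2), simplified])
  next
    case 2
    then show thesis
      using that[of fps_X 1] line_gen_even_not_dvd[of m b a] line_gen_odd[of "Suc m" b a]
      by (simp add: T_def[symmetric] T' arrow_def coarrow_def mapply_def vec2_scale_def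
          distrib_left mult.commute)
  next
    case 3
    then show thesis
      using that[of fps_X 1] line_gen_odd[of m b a] line_gen_even_dvd[of "Suc m" b a]
      by (simp add: T_def[symmetric] T' arrow_def coarrow_def mapply_def vec2_scale_def
          fps_X_mult_fps_shift_1[OF 3(2), simplified])
  next
    case 4
    then show thesis
      using that[of 1 fps_X] line_gen_odd[of m b a] line_gen_even_not_dvd[of "Suc m" b a]
      by (simp add: T_def[symmetric] T' arrow_def coarrow_def mapply_def vec2_scale_def
          right_diff_distrib distrib_left mult.commute)
  qed
qed

lemma vec2_det_line_gen:
  assumes "\<beta> \<noteq> 0" and "even m \<Longrightarrow> psum b m $ 0 \<in> {0, \<beta>}"
  shows "vec2_det (line_gen b 0 m) (line_gen b \<beta> m) = fps_const \<beta>"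
proof -
  define P where "P = psum b m"
  consider "odd m" | "even m" "P $ 0 = 0" | "even m" "P $ 0 = \<beta>"
    using assms(2) P_def by blast
  then show ?thesis
  proof cases
    case 1
    then show ?thesis by (simp add: line_gen_def vec2_det_def P_def[symmetric])
  next
    case 2
    then show ?thesis
      using assms(1) fps_X_mult_fps_shift_1[of P]
      by (simp add: line_gen_def vec2_det_def P_def[symmetric] algebra_simps)
  next
    case 3
    then show ?thesis
      using assms(1) fps_X_mult_fps_shift_1[of "P - fps_const \<beta>"]
      by (simp add: line_gen_def vec2_det_def P_def[symmetric] algebra_simps)
  qed
qed

context rep_chain
begin

lemma line_gen_step:
  assumes "i \<in> {1..n}"
  obtains \<kappa> \<kappa>' where
    "mapply (X i) (line_gen b a (cnt (i - 1))) = vec2_scale \<kappa> (line_gen b a (cnt i))"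
    "mapply (Y i) (line_gen b a (cnt i)) = vec2_scale \<kappa>' (line_gen b a (cnt (i - 1)))"
  using chain_step[OF assms]
proof (elim disjE conjE exE)
  fix c d assume "cnt i = cnt (i - 1)" "X i = scalar2 c" "Y i = scalar2 d"
  then show thesis using that[of c d] by simp
next
  let ?m = "cnt (i - 1)"
  assume "cnt i = Suc ?m" "X i = arrow (cnt i) (b (cnt i))" "Y i = coarrow (cnt i) (b (cnt i))"
  moreover obtain \<kappa> \<kappa>' where
    "mapply (arrow (Suc ?m) (b (Suc ?m))) (line_gen b a ?m) = vec2_scale \<kappa> (line_gen b a (Suc ?m))"
    "mapply (coarrow (Suc ?m) (b (Suc ?m))) (line_gen b a (Suc ?m)) = vec2_scale \<kappa>' (line_gen b a ?m)"
    by (rule arrows_line_gen)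
  ultimately show thesis using that[of \<kappa> \<kappa>'] by simp
qed

lemma line_gen_subrep:
  assumes closed: "even (cnt n)" "psum b (cnt n) = 0"
  shows "subrep n X Y (\<lambda>i. vec2_line (line_gen b a (cnt i)))"
  unfolding subrep_def
proof (intro ballI conjI)
  fix i assume i: "i \<in> {1..n}"
  have wrap: "line_gen b a (cnt (cprev n i)) = line_gen b a (cnt (i - 1))"
  proof (cases "i = 1")
    case True
    then show ?thesis using closed by (simp add: cprev_def cnt_0 line_gen_def)
  qed (simp add: cprev_def)
  obtain \<kappa> \<kappa>' where
    "mapply (X i) (line_gen b a (cnt (i - 1))) = vec2_scale \<kappa> (line_gen b a (cnt i))"
    "mapply (Y i) (line_gen b a (cnt i)) = vec2_scale \<kappa>' (line_gen b a (cnt (i - 1)))"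
    by (metis line_gen_step[OF i])
  note maps = vec2_line_mapply[OF this(1)] vec2_line_mapply[OF this(2)]
  show "fps_submodule (vec2_line (line_gen b a (cnt i)))"
    by (rule fps_submodule_vec2_line)
  show "mapply (X i) v \<in> vec2_line (line_gen b a (cnt i))"
    if "v \<in> vec2_line (line_gen b a (cnt (cprev n i)))" for v
    using maps(1) that unfolding wrap .
  show "mapply (Y i) v \<in> vec2_line (line_gen b a (cnt (cprev n i)))"
    if "v \<in> vec2_line (line_gen b a (cnt i))" for v
    using maps(2) that unfolding wrap .
qed

lemma decomposable_if_two_values:
  assumes "n \<ge> 1" and closed: "even (cnt n)" "psum b (cnt n) = 0" and "\<beta> \<noteq> 0"
    and vals: "\<And>i. i \<in> {1..n} \<Longrightarrow> even (cnt i) \<Longrightarrow> psum b (cnt i) $ 0 \<in> {0, \<beta>}"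
  shows "decomposable_rep n X Y"
proof -
  define W where "W a i = vec2_line (line_gen b a (cnt i))" for a i
  have "subrep n X Y (W a)" for a
    unfolding W_def using line_gen_subrep[OF closed] .
  moreover have "complementary (W 0 i) (W \<beta> i)" if "i \<in> {1..n}" for i
  proof -
    have "vec2_det (line_gen b 0 (cnt i)) (line_gen b \<beta> (cnt i)) $ 0 = \<beta>"
      using vec2_det_line_gen[OF \<open>\<beta> \<noteq> 0\<close> vals[OF that]] by simp
    then show ?thesis
      unfolding W_def using complementary_vec2_line \<open>\<beta> \<noteq> 0\<close> by simp
  qed
  moreover have "W a 1 \<noteq> {0}" for a
    unfolding W_def using line_gen_in_vec2_line line_gen_nonzero by blast
  moreover have "(1::nat) \<in> {1..n}" using \<open>n \<ge> 1\<close> by simp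
  ultimately show ?thesis
    unfolding decomposable_rep_def complementary_def[symmetric]
    by (intro exI[of _ "W 0"] exI[of _ "W \<beta>"]) blast
qed

lemma single_nonzero_value:
  fixes f :: "nat \<Rightarrow> 'a::zero_neq_one"
  assumes "\<not> (\<exists>j1 j2. j1 \<le> N \<and> j2 \<le> N \<and> f j1 \<noteq> 0 \<and> f j2 \<noteq> 0 \<and> f j1 \<noteq> f j2)"
  obtains \<beta> where "\<beta> \<noteq> 0" and "\<And>j. j \<le> N \<Longrightarrow> f j \<in> {0, \<beta>}"
proof (cases "\<exists>j0\<le>N. f j0 \<noteq> 0")
  case True
  then obtain j0 where "j0 \<le> N" "f j0 \<noteq> 0" by blast
  then show thesis using that[of "f j0"] assms by blast
next
  case False
  then show thesis using that[of 1] by auto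
qed

theorem indecomposable_iff:
  assumes "n \<ge> 1" "cnt n = 2 * N" "psum b (2 * N) = 0"
  shows "indecomposable_rep n X Y \<longleftrightarrow>
    (\<exists>j1 j2. j1 \<le> N \<and> j2 \<le> N \<and> psum b (2 * j1) $ 0 \<noteq> 0 \<and> psum b (2 * j2) $ 0 \<noteq> 0
       \<and> psum b (2 * j1) $ 0 \<noteq> psum b (2 * j2) $ 0)" (is "_ \<longleftrightarrow> (\<exists>j1 j2. ?two j1 j2)")
proof
  assume indec: "indecomposable_rep n X Y"
  show "\<exists>j1 j2. ?two j1 j2"
  proof (rule ccontr)
    assume none: "\<not> (\<exists>j1 j2. ?two j1 j2)"
    obtain \<beta> where "\<beta> \<noteq> 0" and \<beta>: "\<And>j. j \<le> N \<Longrightarrow> psum b (2 * j) $ 0 \<in> {0, \<beta>}"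
      using single_nonzero_value[OF none] by blast
    have "psum b (cnt i) $ 0 \<in> {0, \<beta>}" if "i \<in> {1..n}" "even (cnt i)" for i
    proof -
      obtain j where j: "cnt i = 2 * j" using \<open>even (cnt i)\<close> by blast
      have "j \<le> N" using cnt_mono[of i n] that(1) j assms(2) by simp
      then show ?thesis using \<beta> j by simp
    qed
    then have "decomposable_rep n X Y"
      using decomposable_if_two_values \<open>\<beta> \<noteq> 0\<close> assms by simp
    then show False using indec unfolding indecomposable_rep_def by blast
  qed
next
  assume "\<exists>j1 j2. ?two j1 j2"
  then obtain j1 j2 where two: "?two j1 j2" by blast
  obtain i1 where "i1 \<le> n" "cnt i1 = 2 * j1" using cnt_attains[of "2 * j1"] two assms(2) by auto
  moreover obtain i2 where "i2 \<le> n" "cnt i2 = 2 * j2" using cnt_attains[of "2 * j2"] two assms(2) by auto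
  ultimately show "indecomposable_rep n X Y"
    using indecomposable_if_two_values[of i1 i2] two assms(1) by simp
qed

end

section \<open>Values of partial sums\<close>

lemma psum_eq_if_zero_between:
  assumes "\<And>l. l1 < l \<Longrightarrow> l \<le> j \<Longrightarrow> c l = 0" and "l1 \<le> j"
  shows "psum c j = psum c l1"
  using assms
proof (induction j)
  case (Suc j)
  show ?case
  proof (cases "l1 = Suc j")
    case False
    then have "psum c j = psum c l1" by (intro Suc.IH) (use Suc.prems in auto)
    moreover have "c (Suc j) = 0" using Suc.prems False by simp
    ultimately show ?thesis by (simp add: psum_Suc)
  qed simp
qed simp

text \<open>The partial sums \<open>psum c (l\<^sub>1 - 1)\<close>, \<open>psum c l\<^sub>1\<close>, \<open>psum c l\<^sub>2\<close> are pairwise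
  distinct, so at least two of them are nonzero.\<close>
lemma noncancelling_pair_two_values:
  fixes c :: "nat \<Rightarrow> 'a::ab_group_add"
  assumes l: "1 \<le> l1" "l1 < l2" "l2 \<le> N" and nz: "c l1 \<noteq> 0" "c l2 \<noteq> 0" "c l1 + c l2 \<noteq> 0"
    and gap: "\<And>l. l1 < l \<Longrightarrow> l < l2 \<Longrightarrow> c l = 0"
  obtains j1 j2 where "j1 \<le> N" "j2 \<le> N" "psum c j1 \<noteq> 0" "psum c j2 \<noteq> 0" "psum c j1 \<noteq> psum c j2"
proof -
  define A where "A = psum c (l1 - 1)"
  have B: "psum c l1 = A + c l1"
    using l(1) psum_Suc[of c "l1 - 1"] by (simp add: A_def)
  have "psum c (l2 - 1) = psum c l1"
    using gap l by (intro psum_eq_if_zero_between) auto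
  then have C: "psum c l2 = A + c l1 + c l2"
    using B l psum_Suc[of c "l2 - 1"] by simp
  have distinct: "A \<noteq> psum c l1" "psum c l1 \<noteq> psum c l2" "A \<noteq> psum c l2"
    using B C nz by (simp_all add: add.assoc)
  have le: "l1 - 1 \<le> N" "l1 \<le> N" "l2 \<le> N" using l by auto
  consider "A = 0" | "psum c l1 = 0" | "A \<noteq> 0" "psum c l1 \<noteq> 0" by blast
  then show thesis
  proof cases
    case 1
    then show thesis using that[OF le(2,3)] distinct by simp
  next
    case 2
    then show thesis using that[OF le(1,3)] distinct unfolding A_def by simp
  next
    case 3
    then show thesis using that[OF le(1,2)] distinct unfolding A_def by simp
  qed
qed

lemma partial_sum_repeats:
  fixes c :: "nat \<Rightarrow> 'a::ab_group_add"
  assumes cancel: "\<And>l1 l2. 1 \<le> l1 \<Longrightarrow> l1 < l2 \<Longrightarrow> l2 \<le> N \<Longrightarrow> c l1 \<noteq> 0 \<Longrightarrow> c l2 \<noteq> 0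
      \<Longrightarrow> (\<forall>l. l1 < l \<and> l < l2 \<longrightarrow> c l = 0) \<Longrightarrow> c l1 + c l2 = 0"
    and m: "Suc m \<le> N"
  shows "(\<exists>j\<le>m. psum c (Suc m) = psum c j) \<or> (\<forall>j\<le>m. psum c j = 0)"
proof -
  let ?L = "{l \<in> {1..m}. c l \<noteq> 0}"
  consider "c (Suc m) = 0" | "?L = {}" | "c (Suc m) \<noteq> 0" "?L \<noteq> {}" by blast
  then show ?thesis
  proof cases
    case 1
    then show ?thesis by (auto simp: psum_Suc)
  next
    case 2
    then have "psum c j = psum c 0" if "j \<le> m" for j
      using that by (intro psum_eq_if_zero_between) auto
    then show ?thesis by simp
  next
    case 3
    define l1 where "l1 = Max ?L"
    have "l1 \<in> ?L" unfolding l1_def using 3(2) by (intro Max_in) auto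
    then have l1: "1 \<le> l1" "l1 \<le> m" "c l1 \<noteq> 0" by auto
    have gap: "c l = 0" if "l1 < l" "l \<le> m" for l
    proof (rule ccontr)
      assume "c l \<noteq> 0"
      then have "l \<in> ?L" using that l1 by auto
      then have "l \<le> l1" unfolding l1_def by (intro Max_ge) auto
      then show False using that by simp
    qed
    have "\<forall>l. l1 < l \<and> l < Suc m \<longrightarrow> c l = 0" using gap by auto
    then have "c l1 + c (Suc m) = 0"
      using cancel[OF l1(1) _ m l1(3) 3(1)] l1(2) by simp
    have "psum c (Suc m) = psum c l1 + c (Suc m)"
      using psum_eq_if_zero_between[of l1 m c] gap l1 by (simp add: psum_Suc)
    also have "\<dots> = psum c (l1 - 1) + (c l1 + c (Suc m))"
      using l1 psum_Suc[of c "l1 - 1"] by (simp add: add.assoc)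
    also have "\<dots> = psum c (l1 - 1)"
      using \<open>c l1 + c (Suc m) = 0\<close> by simp
    finally show ?thesis using l1 by (intro disjI1 exI[of _ "l1 - 1"]) simp
  qed
qed

lemma partial_sums_one_nonzero_value:
  fixes c :: "nat \<Rightarrow> 'a::ab_group_add"
  assumes cancel: "\<And>l1 l2. 1 \<le> l1 \<Longrightarrow> l1 < l2 \<Longrightarrow> l2 \<le> N \<Longrightarrow> c l1 \<noteq> 0 \<Longrightarrow> c l2 \<noteq> 0
      \<Longrightarrow> (\<forall>l. l1 < l \<and> l < l2 \<longrightarrow> c l = 0) \<Longrightarrow> c l1 + c l2 = 0"
  shows "m \<le> N \<Longrightarrow> j1 \<le> m \<Longrightarrow> j2 \<le> m \<Longrightarrow> psum c j1 \<noteq> 0 \<Longrightarrow> psum c j2 \<noteq> 0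
    \<Longrightarrow> psum c j1 = psum c j2"
proof (induction m arbitrary: j1 j2)
  case (Suc m)
  have last: "psum c (Suc m) = psum c j" if j: "j \<le> m" "psum c j \<noteq> 0" "psum c (Suc m) \<noteq> 0" for j
  proof -
    have "(\<exists>j'\<le>m. psum c (Suc m) = psum c j') \<or> (\<forall>j\<le>m. psum c j = 0)"
      by (rule partial_sum_repeats[OF cancel Suc.prems(1)])
    then obtain j' where j': "j' \<le> m" "psum c (Suc m) = psum c j'"
      using j by blast
    have "m \<le> N" using Suc.prems(1) by simp
    from Suc.IH[OF this j'(1) j(1)] show ?thesis using j' j by simp
  qed
  consider "j1 \<le> m" "j2 \<le> m" | "j1 = Suc m" "j2 \<le> m" | "j1 \<le> m" "j2 = Suc m" | "j1 = Suc m" "j2 = Suc m"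
    using Suc.prems(2,3) by linarith
  then show ?case
  proof cases
    case 1
    then show ?thesis using Suc by simp
  next
    case 2
    then show ?thesis using last Suc.prems by simp
  next
    case 3
    then show ?thesis using last[of j1] Suc.prems by simp
  qed simp
qed simp

lemma partial_sums_two_nonzero_values_iff:
  fixes c :: "nat \<Rightarrow> 'a::ab_group_add"
  shows "(\<exists>j1 j2. j1 \<le> N \<and> j2 \<le> N \<and> psum c j1 \<noteq> 0 \<and> psum c j2 \<noteq> 0 \<and> psum c j1 \<noteq> psum c j2)
    \<longleftrightarrow> (\<exists>l1 l2. 1 \<le> l1 \<and> l1 < l2 \<and> l2 \<le> N \<and> c l1 \<noteq> 0 \<and> c l2 \<noteq> 0 \<and> c l1 + c l2 \<noteq> 0
          \<and> (\<forall>l. l1 < l \<and> l < l2 \<longrightarrow> c l = 0))"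
    (is "(\<exists>j1 j2. ?two j1 j2) \<longleftrightarrow> (\<exists>l1 l2. ?pair l1 l2)")
proof
  assume "\<exists>j1 j2. ?two j1 j2"
  then obtain j1 j2 where two: "?two j1 j2" by blast
  show "\<exists>l1 l2. ?pair l1 l2"
  proof (rule ccontr)
    assume "\<not> (\<exists>l1 l2. ?pair l1 l2)"
    then have "c l1 + c l2 = 0"
      if "1 \<le> l1" "l1 < l2" "l2 \<le> N" "c l1 \<noteq> 0" "c l2 \<noteq> 0" "\<forall>l. l1 < l \<and> l < l2 \<longrightarrow> c l = 0"
      for l1 l2
      using that by blast
    then have "psum c j1 = psum c j2"
      using partial_sums_one_nonzero_value[of N c N j1 j2] two by simp
    then show False using two by simp
  qed
next
  assume "\<exists>l1 l2. ?pair l1 l2"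
  then obtain l1 l2 where l: "1 \<le> l1" "l1 < l2" "l2 \<le> N"
    and nz: "c l1 \<noteq> 0" "c l2 \<noteq> 0" "c l1 + c l2 \<noteq> 0"
    and gap: "\<forall>l. l1 < l \<and> l < l2 \<longrightarrow> c l = 0"
    by blast
  obtain j1 j2 where "j1 \<le> N" "j2 \<le> N" "psum c j1 \<noteq> 0" "psum c j2 \<noteq> 0" "psum c j1 \<noteq> psum c j2"
    using noncancelling_pair_two_values[OF l nz] gap by blast
  then show "\<exists>j1 j2. ?two j1 j2" by blast
qed

section \<open>The representation \<open>\<bbbM>(I,J)\<close>\<close>

definition pair_residue :: "(nat \<Rightarrow> complex fps) \<Rightarrow> nat \<Rightarrow> complex" where
  "pair_residue b l = (b (2 * l - 1) + b (2 * l)) $ 0"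

lemma psum_even_nth_0: "psum b (2 * j) $ 0 = psum (pair_residue b) j"
proof (induction j)
  case (Suc j)
  have "2 * Suc j = Suc (Suc (2 * j))" "2 * Suc j - 1 = Suc (2 * j)" by simp_all
  then show ?case using Suc by (simp add: psum_Suc pair_residue_def)
qed simp

lemma fps_X_dvd_iff: "fps_X dvd f \<longleftrightarrow> f $ 0 = 0" for f :: "complex fps"
proof
  assume "fps_X dvd f"
  then obtain g where "f = fps_X * g" by (elim dvdE)
  then show "f $ 0 = 0" by simp
next
  assume "f $ 0 = 0"
  then have "fps_X * fps_shift 1 f = f" by (rule fps_X_mult_fps_shift_1)
  then show "fps_X dvd f" by (metis dvd_triv_left)
qed

lemma odd_pair_dvd_iff:
  "odd p \<Longrightarrow> fps_X dvd (b p + b (p + 1)) \<longleftrightarrow> pair_residue b ((p + 1) div 2) = 0"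
  by (elim oddE) (simp add: pair_residue_def fps_X_dvd_iff)

lemma odd_pairs_dvd_iff:
  "odd p \<Longrightarrow> odd q \<Longrightarrow> fps_X dvd (b p + b (p + 1) + b q + b (q + 1))
     \<longleftrightarrow> pair_residue b ((p + 1) div 2) + pair_residue b ((q + 1) div 2) = 0"
  by (elim oddE) (simp add: pair_residue_def fps_X_dvd_iff add.assoc)

lemma odd_pair_condition_iff:
  "(\<exists>p q. odd p \<and> odd q \<and> p < q \<and> q \<le> 2*r - 1
       \<and> \<not> fps_X dvd (b p + b (p+1))
       \<and> \<not> fps_X dvd (b q + b (q+1))
       \<and> \<not> fps_X dvd (b p + b (p+1) + b q + b (q+1))
       \<and> (\<forall>i. odd i \<and> p < i \<and> i < q \<longrightarrow> fps_X dvd (b i + b (i+1))))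
   \<longleftrightarrow> (\<exists>l1 l2. 1 \<le> l1 \<and> l1 < l2 \<and> l2 \<le> r
       \<and> pair_residue b l1 \<noteq> 0 \<and> pair_residue b l2 \<noteq> 0 \<and> pair_residue b l1 + pair_residue b l2 \<noteq> 0
       \<and> (\<forall>l. l1 < l \<and> l < l2 \<longrightarrow> pair_residue b l = 0))"
  (is "(\<exists>p q. ?odd p q) \<longleftrightarrow> (\<exists>l1 l2. ?pair l1 l2)")
proof
  assume "\<exists>p q. ?odd p q"
  then obtain p q where pq: "?odd p q" by blast
  have "?pair ((p + 1) div 2) ((q + 1) div 2)"
  proof (intro conjI allI impI)
    show "1 \<le> (p + 1) div 2" "(p + 1) div 2 < (q + 1) div 2" "(q + 1) div 2 \<le> r"
      using pq by (auto elim!: oddE)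
    show "pair_residue b ((p + 1) div 2) \<noteq> 0" "pair_residue b ((q + 1) div 2) \<noteq> 0"
      "pair_residue b ((p + 1) div 2) + pair_residue b ((q + 1) div 2) \<noteq> 0"
      using pq odd_pair_dvd_iff odd_pairs_dvd_iff by blast+
  next
    fix l assume l: "(p + 1) div 2 < l \<and> l < (q + 1) div 2"
    then have "odd (2 * l - 1) \<and> p < 2 * l - 1 \<and> 2 * l - 1 < q" "(2 * l - 1 + 1) div 2 = l"
      using pq by (auto elim!: oddE)
    then show "pair_residue b l = 0" using pq odd_pair_dvd_iff by metis
  qed
  then show "\<exists>l1 l2. ?pair l1 l2" by blast
next
  assume "\<exists>l1 l2. ?pair l1 l2"
  then obtain l1 l2 where l: "?pair l1 l2" by blast
  have dvd: "fps_X dvd (b (2 * l - 1) + b (2 * l - 1 + 1)) \<longleftrightarrow> pair_residue b l = 0"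
    if "1 \<le> l" for l
    using that by (simp add: fps_X_dvd_iff pair_residue_def)
  have dvd2: "fps_X dvd (b (2 * l1 - 1) + b (2 * l1 - 1 + 1) + b (2 * l2 - 1) + b (2 * l2 - 1 + 1))
      \<longleftrightarrow> pair_residue b l1 + pair_residue b l2 = 0"
    using l by (simp add: fps_X_dvd_iff pair_residue_def add.assoc)
  have "?odd (2 * l1 - 1) (2 * l2 - 1)"
  proof (intro conjI allI impI)
    show "odd (2 * l1 - 1)" "odd (2 * l2 - 1)" "2 * l1 - 1 < 2 * l2 - 1" "2 * l2 - 1 \<le> 2 * r - 1"
      using l by auto
    show "\<not> fps_X dvd (b (2 * l1 - 1) + b (2 * l1 - 1 + 1))"
      "\<not> fps_X dvd (b (2 * l2 - 1) + b (2 * l2 - 1 + 1))"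
      "\<not> fps_X dvd (b (2 * l1 - 1) + b (2 * l1 - 1 + 1) + b (2 * l2 - 1) + b (2 * l2 - 1 + 1))"
      using l dvd[of l1] dvd[of l2] dvd2 by simp_all
  next
    fix i assume i: "odd i \<and> 2 * l1 - 1 < i \<and> i < 2 * l2 - 1"
    then have "l1 < (i + 1) div 2" "(i + 1) div 2 < l2" by (auto elim!: oddE)
    then show "fps_X dvd (b i + b (i + 1))" using l i odd_pair_dvd_iff by blast
  qed
  then show "\<exists>p q. ?odd p q" by blast
qed

lemma strict_mono_on_atLeastAtMost_SucI:
  fixes f :: "nat \<Rightarrow> 'a::order"
  assumes "\<And>u. a \<le> u \<Longrightarrow> Suc u \<le> c \<Longrightarrow> f u < f (Suc u)"
  shows "strict_mono_on {a..c} f"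
proof (rule strict_mono_onI)
  fix u v assume "u \<in> {a..c}" "v \<in> {a..c}" "u < v"
  then show "f u < f v"
  proof (induction v)
    case (Suc v)
    have step: "f v < f (Suc v)" using Suc.prems by (intro assms) auto
    show ?case
    proof (cases "u = v")
      case False
      then have "f u < f v" using Suc.prems by (intro Suc.IH) auto
      then show ?thesis using step by (rule less_trans)
    qed (use step in simp)
  qed simp
qed

definition special_vertex :: "(nat \<Rightarrow> nat) \<Rightarrow> (nat \<Rightarrow> nat) \<Rightarrow> nat \<Rightarrow> nat" where
  "special_vertex ii jj u = (if odd u then ii ((u + 1) div 2) else jj (u div 2))"

definition special_count :: "(nat \<Rightarrow> nat) \<Rightarrow> (nat \<Rightarrow> nat) \<Rightarrow> nat \<Rightarrow> nat \<Rightarrow> nat" where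
  "special_count ii jj r i = card {u \<in> {1..2*r}. special_vertex ii jj u \<le> i}"

lemma special_vertex_odd: "1 \<le> l \<Longrightarrow> special_vertex ii jj (2 * l - 1) = ii l"
  by (simp add: special_vertex_def)

lemma special_vertex_even: "special_vertex ii jj (2 * l) = jj l"
  by (simp add: special_vertex_def)

locale interlaced =
  fixes n r :: nat and ii jj :: "nat \<Rightarrow> nat"
  assumes ii_less_jj: "\<And>l. l \<in> {1..r} \<Longrightarrow> 1 \<le> ii l \<and> ii l < jj l \<and> jj l \<le> n"
    and jj_less_ii: "\<And>l. l \<in> {1..<r} \<Longrightarrow> jj l < ii (Suc l)"
begin

lemma strict_mono_special_vertex: "strict_mono_on {1..2*r} (special_vertex ii jj)"
proof (rule strict_mono_on_atLeastAtMost_SucI)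
  fix u assume u: "1 \<le> u" "Suc u \<le> 2 * r"
  show "special_vertex ii jj u < special_vertex ii jj (Suc u)"
  proof (cases "odd u")
    case True
    define l where "l = (u + 1) div 2"
    have l: "l \<in> {1..r}" and "u = 2 * l - 1" "Suc u = 2 * l"
      using u True by (auto simp: l_def elim!: oddE)
    moreover have "1 \<le> l" using l by simp
    ultimately have "special_vertex ii jj u = ii l" "special_vertex ii jj (Suc u) = jj l"
      using special_vertex_odd[where l = l] special_vertex_even[where l = l] by simp_all
    then show ?thesis using ii_less_jj[OF l] by simp
  next
    case False
    define l where "l = u div 2"
    have l: "l \<in> {1..<r}" and "u = 2 * l" "Suc u = 2 * Suc l - 1"
      using u False by (auto simp: l_def)
    then have "special_vertex ii jj u = jj l" "special_vertex ii jj (Suc u) = ii (Suc l)"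
      using special_vertex_odd[where l = "Suc l"] special_vertex_even[where l = l] by simp_all
    then show ?thesis using jj_less_ii[OF l] by simp
  qed
qed

lemma special_vertex_range: "u \<in> {1..2*r} \<Longrightarrow> special_vertex ii jj u \<in> {1..n}"
  using ii_less_jj[of "(u + 1) div 2"] ii_less_jj[of "u div 2"]
  by (cases "odd u") (auto simp: special_vertex_def elim!: oddE)

lemma special_vertex_inj: "u \<in> {1..2*r} \<Longrightarrow> v \<in> {1..2*r} \<Longrightarrow>
    special_vertex ii jj u = special_vertex ii jj v \<longleftrightarrow> u = v"
  using strict_mono_on_eqD[OF strict_mono_special_vertex] by blast

lemma special_count_0: "special_count ii jj r 0 = 0"
  using special_vertex_range by (force simp: special_count_def)

lemma special_count_n: "special_count ii jj r n = 2 * r"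
proof -
  have "{u \<in> {1..2*r}. special_vertex ii jj u \<le> n} = {1..2*r}"
    using special_vertex_range by auto
  then show ?thesis by (simp add: special_count_def)
qed

lemma special_count_special_vertex:
  assumes "v \<in> {1..2*r}"
  shows "special_count ii jj r (special_vertex ii jj v) = v"
    and "special_count ii jj r (special_vertex ii jj v - 1) = v - 1"
proof -
  have "{u \<in> {1..2*r}. special_vertex ii jj u \<le> special_vertex ii jj v} = {1..v}"
    using assms strict_mono_on_less_eq[OF strict_mono_special_vertex] by auto
  then show "special_count ii jj r (special_vertex ii jj v) = v"
    by (simp add: special_count_def)
  have "1 \<le> special_vertex ii jj v" using special_vertex_range[OF assms] by simp
  then have "{u \<in> {1..2*r}. special_vertex ii jj u \<le> special_vertex ii jj v - 1} = {1..v - 1}"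
    using assms strict_mono_on_less[OF strict_mono_special_vertex] by fastforce
  then show "special_count ii jj r (special_vertex ii jj v - 1) = v - 1"
    by (simp add: special_count_def)
qed

lemma special_count_ordinary:
  assumes "i \<notin> special_vertex ii jj ` {1..2*r}"
  shows "special_count ii jj r i = special_count ii jj r (i - 1)"
proof -
  have "{u \<in> {1..2*r}. special_vertex ii jj u \<le> i} = {u \<in> {1..2*r}. special_vertex ii jj u \<le> i - 1}"
    using assms by force
  then show ?thesis by (simp add: special_count_def)
qed

lemma MX_MY_special:
  assumes v: "v \<in> {1..2*r}"
  shows "MX I J r ii jj b (special_vertex ii jj v) = arrow v (b v)
    \<and> MY I J r ii jj b (special_vertex ii jj v) = coarrow v (b v)"
proof (cases "odd v")
  case True
  define l where "l = (v + 1) div 2"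
  have l: "l \<in> {1..r}" "2 * l - 1 = v" using v True by (auto simp: l_def elim!: oddE)
  have "(THE l'. l' \<in> {1..r} \<and> ii l' = special_vertex ii jj v) = l"
  proof (rule the_equality)
    fix l' assume l': "l' \<in> {1..r} \<and> ii l' = special_vertex ii jj v"
    then have "2 * l' - 1 \<in> {1..2*r}" "special_vertex ii jj (2 * l' - 1) = special_vertex ii jj v"
      using special_vertex_odd by auto
    then have "2 * l' - 1 = v" using special_vertex_inj v by blast
    then show "l' = l" using l l' by simp
  qed (use l special_vertex_odd in auto)
  moreover have "\<exists>l'\<in>{1..r}. ii l' = special_vertex ii jj v"
    using l special_vertex_odd by (metis atLeastAtMost_iff)
  ultimately show ?thesis using True l by (simp add: MX_def MY_def arrow_def coarrow_def)
next
  case False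
  define l where "l = v div 2"
  have l: "l \<in> {1..r}" "2 * l = v" using v False by (auto simp: l_def)
  have "ii l' \<noteq> special_vertex ii jj v" if "l' \<in> {1..r}" for l'
  proof
    assume "ii l' = special_vertex ii jj v"
    then have "2 * l' - 1 \<in> {1..2*r}" "special_vertex ii jj (2 * l' - 1) = special_vertex ii jj v"
      using special_vertex_odd that by auto
    then have "2 * l' - 1 = v" using special_vertex_inj v by blast
    then show False using False that by auto
  qed
  moreover have "(THE l'. l' \<in> {1..r} \<and> jj l' = special_vertex ii jj v) = l"
  proof (rule the_equality)
    fix l' assume "l' \<in> {1..r} \<and> jj l' = special_vertex ii jj v"
    then have "2 * l' \<in> {1..2*r}" "special_vertex ii jj (2 * l') = special_vertex ii jj v"
      using special_vertex_even by auto
    then have "2 * l' = v" using special_vertex_inj v by blast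
    then show "l' = l" using l by simp
  qed (use l special_vertex_even in auto)
  moreover have "\<exists>l'\<in>{1..r}. jj l' = special_vertex ii jj v"
    using l special_vertex_even by metis
  ultimately show ?thesis using False l by (simp add: MX_def MY_def arrow_def coarrow_def)
qed

lemma MX_MY_ordinary:
  assumes "i \<notin> special_vertex ii jj ` {1..2*r}"
  shows "\<exists>c d. c \<noteq> 0 \<and> MX I J r ii jj b i = scalar2 c \<and> MY I J r ii jj b i = scalar2 d"
proof -
  have "ii l \<noteq> i" if "l \<in> {1..r}" for l
  proof
    assume "ii l = i"
    then have "i = special_vertex ii jj (2 * l - 1)" "2 * l - 1 \<in> {1..2*r}"
      using that special_vertex_odd by auto
    then show False using assms by blast
  qed
  moreover have "jj l \<noteq> i" if "l \<in> {1..r}" for l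
  proof
    assume "jj l = i"
    then have "i = special_vertex ii jj (2 * l)" "2 * l \<in> {1..2*r}"
      using that special_vertex_even by auto
    then show False using assms by blast
  qed
  ultimately show ?thesis
    by (cases "i \<in> I \<inter> J") (auto simp: MX_def MY_def identity2_def tE_def scalar2_def)
qed

lemma rep_chain_MX_MY:
  "rep_chain n (special_count ii jj r) b (MX I J r ii jj b) (MY I J r ii jj b)"
proof
  show "special_count ii jj r 0 = 0" by (rule special_count_0)
next
  fix i assume "i \<in> {1..n}"
  show "(special_count ii jj r i = special_count ii jj r (i - 1)
       \<and> (\<exists>c d. c \<noteq> 0 \<and> MX I J r ii jj b i = scalar2 c \<and> MY I J r ii jj b i = scalar2 d))
     \<or> (special_count ii jj r i = Suc (special_count ii jj r (i - 1))
       \<and> MX I J r ii jj b i = arrow (special_count ii jj r i) (b (special_count ii jj r i))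
       \<and> MY I J r ii jj b i = coarrow (special_count ii jj r i) (b (special_count ii jj r i)))"
  proof (cases "i \<in> special_vertex ii jj ` {1..2*r}")
    case True
    then obtain v where v: "v \<in> {1..2*r}" "i = special_vertex ii jj v" by blast
    then show ?thesis
      using special_count_special_vertex[OF v(1)] MX_MY_special[OF v(1)] by auto
  next
    case False
    then show ?thesis using special_count_ordinary MX_MY_ordinary by blast
  qed
qed

end

theorem theorem3p3:
  fixes n k r :: nat and I J :: "nat set" and ii jj :: "nat \<Rightarrow> nat"
    and b :: "nat \<Rightarrow> complex fps"
  assumes "n \<ge> 6" and "1 \<le> k" and "k \<le> n - 1"
    and "I \<subseteq> {1..n}" and "J \<subseteq> {1..n}" and "card I = k" and "card J = k"
    and "tightly_interlacing k I J r"
    and "I - J = ii ` {1..r}" and "J - I = jj ` {1..r}"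
    and "\<forall>l\<in>{1..r}. 1 \<le> ii l \<and> ii l < jj l \<and> jj l \<le> n"
    and "\<forall>l\<in>{1..<r}. jj l < ii (Suc l)"
    and "(\<Sum>l=1..2*r. b l) = 0"
  shows "indecomposable_rep n (MX I J r ii jj b) (MY I J r ii jj b) \<longleftrightarrow>
    (\<exists>p q. odd p \<and> odd q \<and> p < q \<and> q \<le> 2*r - 1
       \<and> \<not> fps_X dvd (b p + b (p+1))
       \<and> \<not> fps_X dvd (b q + b (q+1))
       \<and> \<not> fps_X dvd (b p + b (p+1) + b q + b (q+1))
       \<and> (\<forall>i. odd i \<and> p < i \<and> i < q \<longrightarrow> fps_X dvd (b i + b (i+1))))"
proof -
  txt \<open>Only the order of \<open>ii\<close> and \<open>jj\<close> matters: \<open>MX\<close> and \<open>MY\<close> are scalar at every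
    other vertex, whatever \<open>I\<close> and \<open>J\<close> are.\<close>
  interpret interlaced n r ii jj
    using assms(11,12) by unfold_locales auto
  interpret rep_chain n "special_count ii jj r" b "MX I J r ii jj b" "MY I J r ii jj b"
    by (rule rep_chain_MX_MY)
  have "special_count ii jj r n = 2 * r" "psum b (2 * r) = 0"
    using special_count_n assms(13) by (simp_all add: psum_def)
  then show ?thesis
    unfolding odd_pair_condition_iff partial_sums_two_nonzero_values_iff[symmetric]
      psum_even_nth_0[symmetric]
    using assms(1) by (intro indecomposable_iff) simp_all
qed

end
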